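(* Let $\tau>0$, $\Lambda\subset\mathbb{R}$ an open interval and $H:\Lambda\times\mathbb{R}\times\mathbb{R}^{2n}\to\mathbb{R}$ continuous with each $H(\lambda,t,\cdot)$ of class $C^2$, all partial derivatives continuous in $(\lambda,t,z)$, and $H(\lambda,t+\tau,z)=H(\lambda,t,z)$, $H(\lambda,-t,Nz)=H(\lambda,t,z)$ for all $(\lambda,t,z)$. Let $v_0$ solve $$\dot u(t)=J\nabla H_{\lambda,t}(u(t)),\quad u(t+\tau)=u(t),\quad u(-t)=Nu(t)\ \forall t\in\mathbb{R}\qquad(\ast)$$ for each $\lambda\in\Lambda$, and let $\gamma_\lambda:[0,\tau]\to{\rm Sp}(2n,\mathbb{R})$ be the fundamental matrix solution of $\dot Z=JH''_{\lambda,t}(v_0(t))Z$, $Z(0)=I$. If $(\mu,v_0)$ is a bifurcation point of $(\ast)$, then $\dot v(t)=JH''_{\mu,t}(v_0(t))v(t)$, $v(t+\tau)=v(t)$, $v(-t)=Nv(t)$ $\forall t$, has nontrivial solutions, i.e. $\nu_{1,\tau}(\gamma_\mu)\neq0$.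
   Context: $J=\begin{pmatrix}0&-I_n\\ I_n&0\end{pmatrix}$, $N=\begin{pmatrix}-I_n&0\\0&I_n\end{pmatrix}$; ${\rm Sp}(2n,\mathbb{R})=\{M:M^TJM=J\}$. $S_\tau=\mathbb{R}/\tau\mathbb{Z}$. $(\mu,v_0)$ is a bifurcation point of $(\ast)$ if each neighbourhood of it in $\Lambda\times W^{1,2}(S_\tau;\mathbb{R}^{2n})$ (equivalently $\Lambda\times C^1(S_\tau;\mathbb{R}^{2n})$) contains $(\lambda,v)$ with $v\ne v_0$ solving $(\ast)$ for $\lambda$. For $\gamma$ with $\gamma(\tau/2)=\begin{pmatrix}A&B\\C&D\end{pmatrix}$ ($n\times n$ blocks), $\nu_{1,\tau}(\gamma)=\dim{\rm Ker}(B)$. *)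

theory Defs
  imports "HOL-Analysis.Analysis"
begin

text \<open>Phase space R^{2n} is modelled as real^('n + 'n): the indices Inl i are the
first n coordinates (x), the indices Inr i the last n coordinates (y).\<close>

type_synonym ('n) phase = "real ^ ('n + 'n)"
type_synonym ('n) phasemat = "real ^ ('n + 'n) ^ ('n + 'n)"

definition Jmat :: "('n::finite) phasemat" where
  "Jmat = (\<chi> a b. case (a, b) of
              (Inl i, Inr j) \<Rightarrow> (if i = j then -1 else 0)
            | (Inr i, Inl j) \<Rightarrow> (if i = j then 1 else 0)
            | _ \<Rightarrow> 0)"

definition Nmat :: "('n::finite) phasemat" where
  "Nmat = (\<chi> a b. if a = b then (case a of Inl _ \<Rightarrow> -1 | Inr _ \<Rightarrow> 1) else 0)"

definition blockB :: "('n::finite) phasemat \<Rightarrow> real ^ 'n ^ 'n" where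
  "blockB M = (\<chi> i j. M $ Inl i $ Inr j)"

definition nu1 :: "real \<Rightarrow> (real \<Rightarrow> ('n::finite) phasemat) \<Rightarrow> nat" where
  "nu1 \<tau> \<gamma> = dim {x :: real ^ 'n. blockB (\<gamma> (\<tau> / 2)) *v x = 0}"

definition solves_star ::
  "real \<Rightarrow> (real \<Rightarrow> real \<Rightarrow> ('n::finite) phase \<Rightarrow> 'n phase) \<Rightarrow> real \<Rightarrow> (real \<Rightarrow> 'n phase) \<Rightarrow> bool" where
  "solves_star \<tau> gradH lam u \<longleftrightarrow>
     (\<forall>t. (u has_vector_derivative (Jmat *v gradH lam t (u t))) (at t)) \<and>
     (\<forall>t. u (t + \<tau>) = u t) \<and>
     (\<forall>t. u (- t) = Nmat *v u t)"

definition bifurcation_point ::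
  "real \<Rightarrow> real set \<Rightarrow> (real \<Rightarrow> real \<Rightarrow> ('n::finite) phase \<Rightarrow> 'n phase) \<Rightarrow> real \<Rightarrow> (real \<Rightarrow> 'n phase) \<Rightarrow> bool" where
  "bifurcation_point \<tau> \<Lambda> gradH \<mu> v0 \<longleftrightarrow>
     \<mu> \<in> \<Lambda> \<and>
     (\<forall>\<epsilon>>0. \<exists>lam\<in>\<Lambda>. \<exists>v. solves_star \<tau> gradH lam v \<and> v \<noteq> v0 \<and> \<bar>lam - \<mu>\<bar> < \<epsilon> \<and>
        (\<forall>t. norm (v t - v0 t) + norm (vector_derivative v (at t) - vector_derivative v0 (at t)) < \<epsilon>))"

end

theory Submission
  imports Defs
begin

text \<open>
  Take solutions \<open>(\<lambda>\<^sub>k, v\<^sub>k)\<close> of \<open>(\<ast>)\<close> converging to \<open>(\<mu>, v\<^sub>0)\<close> with \<open>v\<^sub>k \<noteq> v\<^sub>0\<close>. Since \<open>v\<^sub>0\<close> solves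
  \<open>(\<ast>)\<close> for every \<open>\<lambda>\<close>, the differences \<open>e\<^sub>k = v\<^sub>k - v\<^sub>0\<close> satisfy
  \<open>e\<^sub>k' = J H''\<^sub>\<mu>(v\<^sub>0) e\<^sub>k + o(|e\<^sub>k|)\<close> locally uniformly in \<open>t\<close>, and \<open>e\<^sub>k(0) \<noteq> 0\<close> by uniqueness for the ODE.
  After normalising by \<open>|e\<^sub>k(0)|\<close> and passing to a subsequence, Gronwall's inequality makes the
  normalised differences locally uniformly Cauchy; their limit is a nonzero solution of the
  linearised problem which inherits periodicity and the reversibility \<open>w(-t) = N w(t)\<close>.
  Finally \<open>w(0)\<close> and \<open>w(\<tau>/2) = \<gamma>\<^sub>\<mu>(\<tau>/2) w(0)\<close> are both fixed by \<open>N\<close>, i.e. have vanishing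
  first block, so the second block of \<open>w(0)\<close> is a nonzero vector in \<open>Ker B\<close>.
\<close>

lemma bounded_linear_matrix_vector_mult_left:
  "bounded_linear (\<lambda>A::real^'n::finite^'m::finite. A *v x)"
proof -
  have "linear (\<lambda>A::real^'n^'m. A *v x)"
    by (rule linearI) (simp_all add: matrix_vector_mult_add_rdistrib vec_eq_iff matrix_vector_mult_def
        sum_distrib_left mult.assoc distrib_right sum.distrib)
  then show ?thesis by (simp add: linear_conv_bounded_linear)
qed

lemma bounded_linear_matrix_mult_left:
  "bounded_linear (\<lambda>B::real^'k::finite^'n::finite. (A::real^'n^'m::finite) ** B)"
proof -
  have "linear (\<lambda>B::real^'k^'n. A ** B)"
    by (rule linearI) (simp_all add: matrix_add_ldistrib vec_eq_iff matrix_matrix_mult_def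
        sum_distrib_left algebra_simps sum.distrib)
  then show ?thesis by (simp add: linear_conv_bounded_linear)
qed

lemma continuous_on_matrix_mult_left [continuous_intros]:
  fixes f :: "'a::topological_space \<Rightarrow> real^'k::finite^'n::finite" and A :: "real^'n^'m::finite"
  shows "continuous_on S f \<Longrightarrow> continuous_on S (\<lambda>x. A ** f x)"
  by (rule bounded_linear.continuous_on[OF bounded_linear_matrix_mult_left])

lemma onorm_matrix_vector_mult_le:
  fixes A :: "real^'n::finite^'m::finite"
  shows "onorm ((*v) A) \<le> real CARD('m) * real CARD('n) * norm A"
proof (rule onorm_le_matrix_component)
  show "\<bar>A $ i $ j\<bar> \<le> norm A" for i j
    using component_le_norm_cart[of "A $ i" j] Finite_Cartesian_Product.norm_nth_le[of A i] by linarith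
qed

lemma onorm_matrix_vector_mult_le_if_norm_small:
  fixes A :: "real^'n::finite^'m::finite"
  assumes "0 \<le> \<epsilon>" and "norm A \<le> \<epsilon> / (real CARD('m) * real CARD('n) + 1)"
  shows "onorm ((*v) A) \<le> \<epsilon>"
proof -
  define c where "c = real CARD('m) * real CARD('n)"
  have "0 \<le> c" by (simp add: c_def)
  have "onorm ((*v) A) \<le> c * (\<epsilon> / (c + 1))"
    using onorm_matrix_vector_mult_le[of A] mult_left_mono[OF assms(2)[folded c_def], of c]
    by (simp add: c_def)
  also have "\<dots> \<le> \<epsilon>" using assms(1) \<open>0 \<le> c\<close> by (simp add: field_simps)
  finally show ?thesis .
qed

lemma norm_matrix_vector_mult_le:
  fixes A :: "real^'n::finite^'m::finite"
  assumes "onorm ((*v) A) \<le> L"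
  shows "norm (A *v x) \<le> L * norm x"
  using onorm[OF matrix_vector_mul_bounded_linear, of A x] mult_right_mono[OF assms norm_ge_zero[of x]]
  by linarith

lemma continuous_matrix_function_onorm_bound:
  fixes M :: "'p::topological_space \<Rightarrow> real^'n::finite^'m::finite"
  assumes "compact K" "continuous_on K M"
  obtains L where "0 \<le> L" "\<And>p. p \<in> K \<Longrightarrow> onorm ((*v) (M p)) \<le> L"
proof -
  have "bounded (M ` K)"
    using compact_imp_bounded[OF compact_continuous_image[OF assms(2,1)]] .
  then obtain B where B: "\<And>p. p \<in> K \<Longrightarrow> norm (M p) \<le> B"
    by (auto simp: bounded_iff)
  show thesis
  proof
    show "0 \<le> real CARD('m) * real CARD('n) * max B 0" by simp
    show "onorm ((*v) (M p)) \<le> real CARD('m) * real CARD('n) * max B 0" if "p \<in> K" for p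
    proof (rule order_trans[OF onorm_matrix_vector_mult_le mult_left_mono])
      show "norm (M p) \<le> max B 0" using B[OF that] by linarith
    qed simp
  qed
qed

lemma continuous_matrix_function_norm_bound:
  fixes M :: "'p::topological_space \<Rightarrow> real^'n::finite^'m::finite"
  assumes "compact K" "continuous_on K M"
  shows "\<exists>L\<ge>0. \<forall>p\<in>K. \<forall>x. norm (M p *v x) \<le> L * norm x"
  using continuous_matrix_function_onorm_bound[OF assms] norm_matrix_vector_mult_le by metis

lemma continuous_on_along_curve:
  fixes f :: "'a::topological_space \<Rightarrow> 'b::topological_space \<Rightarrow> 'c::topological_space \<Rightarrow> 'd::topological_space"
  assumes f: "continuous_on (\<Lambda> \<times> UNIV \<times> UNIV) (\<lambda>(lam, t, z). f lam t z)"
    and "\<mu> \<in> \<Lambda>" and "continuous_on UNIV u"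
  shows "continuous_on UNIV (\<lambda>t. f \<mu> t (u t))"
proof (rule continuous_on_compose2[OF f, of UNIV "\<lambda>t. (\<mu>, t, u t)", simplified])
  show "continuous_on UNIV (\<lambda>t. (\<mu>, t, u t))" by (intro continuous_intros assms(3))
  show "range (\<lambda>t. (\<mu>, t, u t)) \<subseteq> \<Lambda> \<times> UNIV" using assms(2) by auto
qed

lemma continuous_on_slice:
  fixes f :: "'a::topological_space \<Rightarrow> 'b::topological_space \<Rightarrow> 'c::topological_space \<Rightarrow> 'd::topological_space"
  assumes f: "continuous_on (\<Lambda> \<times> UNIV \<times> UNIV) (\<lambda>(lam, t, z). f lam t z)" and "lam \<in> \<Lambda>"
  shows "continuous_on UNIV (\<lambda>(t, z). f lam t z)"
proof -
  have "continuous_on UNIV (\<lambda>x. (\<lambda>(lam, t, z). f lam t z) (lam, x))"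
    by (rule continuous_on_compose2[OF f]) (use assms(2) in \<open>auto intro: continuous_intros\<close>)
  then show ?thesis by (simp add: case_prod_unfold)
qed

lemma linearization_error_bound:
  fixes f :: "real^'m::finite \<Rightarrow> real^'n::finite" and D :: "real^'m \<Rightarrow> real^'m^'n"
  assumes "convex S"
    and f_deriv: "\<And>y. y \<in> S \<Longrightarrow> (f has_derivative (\<lambda>h. D y *v h)) (at y)"
    and D_near: "\<And>y. y \<in> S \<Longrightarrow> onorm ((*v) (D y - M)) \<le> \<epsilon>"
    and "a \<in> S" "b \<in> S"
  shows "norm (f b - f a - M *v (b - a)) \<le> \<epsilon> * norm (b - a)"
proof -
  have "norm ((\<lambda>y. f y - M *v y) b - (\<lambda>y. f y - M *v y) a) \<le> \<epsilon> * norm (b - a)"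
  proof (rule differentiable_bound[of S _ "\<lambda>y h. (D y - M) *v h"])
    show "((\<lambda>y. f y - M *v y) has_derivative (\<lambda>h. (D y - M) *v h)) (at y within S)" if "y \<in> S" for y
      unfolding matrix_vector_mult_diff_rdistrib
      by (rule has_derivative_at_withinI, intro has_derivative_diff f_deriv[OF that]
          bounded_linear.has_derivative[OF matrix_vector_mul_bounded_linear has_derivative_ident])
    show "onorm (\<lambda>h. (D y - M) *v h) \<le> \<epsilon>" if "y \<in> S" for y
      using D_near[OF that] by simp
  qed (use assms(1,4,5) in simp_all)
  then show ?thesis by (simp add: matrix_vector_mult_diff_distrib algebra_simps)
qed

section \<open>Gronwall estimates and uniqueness\<close>

lemma has_real_derivative_power2_norm:
  fixes u :: "real \<Rightarrow> 'a::real_inner"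
  assumes "(u has_vector_derivative u') (at s within S)"
  shows "((\<lambda>s. (norm (u s))\<^sup>2) has_real_derivative 2 * (u s \<bullet> u')) (at s within S)"
  unfolding has_field_derivative_def power2_norm_eq_inner
  using has_derivative_inner[OF assms[unfolded has_vector_derivative_def] assms[unfolded has_vector_derivative_def]]
  by (rule has_derivative_eq_rhs) (auto simp: fun_eq_iff inner_commute algebra_simps)

lemma gronwall_norm_sq:
  fixes u u' :: "real \<Rightarrow> 'a::real_inner"
  assumes L: "0 \<le> L"
    and der: "\<And>s. s \<in> {0..T} \<Longrightarrow> (u has_vector_derivative u' s) (at s within {0..T})"
    and bound: "\<And>s. s \<in> {0..T} \<Longrightarrow> norm (u' s) \<le> L * norm (u s) + \<eta>"
    and t: "t \<in> {0..T}"
  shows "(norm (u t))\<^sup>2 + \<eta>\<^sup>2 \<le> ((norm (u 0))\<^sup>2 + \<eta>\<^sup>2) * exp ((2 * L + 1) * t)"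
proof -
  define K where "K = 2 * L + 1"
  define q where "q s = ((norm (u s))\<^sup>2 + \<eta>\<^sup>2) * exp (- K * s)" for s
  define q' where "q' s = (2 * (u s \<bullet> u' s) - K * ((norm (u s))\<^sup>2 + \<eta>\<^sup>2)) * exp (- K * s)" for s
  have q_deriv: "(q has_real_derivative q' s) (at s within {0..T})" if s: "s \<in> {0..T}" for s
  proof -
    have "((\<lambda>s. exp (- K * s)) has_real_derivative exp (- K * s) * (- K)) (at s within {0..T})"
      by (auto intro!: derivative_eq_intros)
    from DERIV_mult[OF DERIV_add[OF has_real_derivative_power2_norm[OF der[OF s]] DERIV_const[of "\<eta>\<^sup>2"]] this]
    show ?thesis unfolding q_def q'_def by (simp add: algebra_simps)
  qed
  have q'_nonpos: "q' s \<le> 0" if s: "s \<in> {0..T}" for s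
  proof -
    have "u s \<bullet> u' s \<le> norm (u s) * (L * norm (u s) + \<eta>)"
      using norm_cauchy_schwarz[of "u s" "u' s"] mult_left_mono[OF bound[OF s] norm_ge_zero[of "u s"]]
      by linarith
    moreover have "2 * norm (u s) * \<eta> \<le> (norm (u s))\<^sup>2 + \<eta>\<^sup>2"
      using sum_squares_bound[of "norm (u s)" \<eta>] by (simp add: power2_eq_square)
    moreover have "0 \<le> L * \<eta>\<^sup>2" using L by simp
    ultimately have "2 * (u s \<bullet> u' s) \<le> K * ((norm (u s))\<^sup>2 + \<eta>\<^sup>2)"
      unfolding K_def by (simp add: algebra_simps power2_eq_square)
    then show ?thesis unfolding q'_def by (simp add: mult_nonpos_nonneg)
  qed
  have "q t \<le> q 0"
  proof (rule DERIV_nonpos_imp_decreasing_open[of 0 t q])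
    show "0 \<le> t" using t by simp
    show "continuous_on {0..t} q"
      using DERIV_continuous_on[OF q_deriv] by (rule continuous_on_subset) (use t in auto)
    show "\<exists>y. (q has_real_derivative y) (at x) \<and> y \<le> 0" if "0 < x" "x < t" for x
      using q_deriv[of x] q'_nonpos[of x] that t at_within_Icc_at[of 0 x T] by auto
  qed
  then have "((norm (u t))\<^sup>2 + \<eta>\<^sup>2) * exp (- K * t) * exp (K * t) \<le> ((norm (u 0))\<^sup>2 + \<eta>\<^sup>2) * exp (K * t)"
    unfolding q_def by (intro mult_right_mono) auto
  then show ?thesis
    by (simp add: K_def mult.assoc exp_add[symmetric] algebra_simps)
qed

lemma gronwall_norm:
  fixes u u' :: "real \<Rightarrow> 'a::real_inner"
  assumes L: "0 \<le> L" and \<eta>: "0 \<le> \<eta>"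
    and der: "\<And>s. s \<in> {0..T} \<Longrightarrow> (u has_vector_derivative u' s) (at s within {0..T})"
    and bound: "\<And>s. s \<in> {0..T} \<Longrightarrow> norm (u' s) \<le> L * norm (u s) + \<eta>"
    and t: "t \<in> {0..T}"
  shows "norm (u t) \<le> (norm (u 0) + \<eta>) * exp ((L + 1) * t)"
proof (rule power2_le_imp_le)
  have "(norm (u t))\<^sup>2 \<le> ((norm (u 0))\<^sup>2 + \<eta>\<^sup>2) * exp ((2 * L + 1) * t)"
    using gronwall_norm_sq[OF L der bound t] zero_le_power2[of \<eta>] by linarith
  also have "\<dots> \<le> (norm (u 0) + \<eta>)\<^sup>2 * (exp ((L + 1) * t))\<^sup>2"
  proof (rule mult_mono)
    show "(norm (u 0))\<^sup>2 + \<eta>\<^sup>2 \<le> (norm (u 0) + \<eta>)\<^sup>2"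
      using \<eta> by (simp add: power2_sum)
    show "exp ((2 * L + 1) * t) \<le> (exp ((L + 1) * t))\<^sup>2"
      using t by (simp add: exp_double[symmetric] algebra_simps)
  qed simp_all
  finally show "(norm (u t))\<^sup>2 \<le> ((norm (u 0) + \<eta>) * exp ((L + 1) * t))\<^sup>2"
    by (simp add: power_mult_distrib)
  show "0 \<le> (norm (u 0) + \<eta>) * exp ((L + 1) * t)" using \<eta> by simp
qed

lemma gronwall_norm_symmetric:
  fixes u u' :: "real \<Rightarrow> 'a::real_inner"
  assumes L: "0 \<le> L" and \<eta>: "0 \<le> \<eta>"
    and der: "\<And>s. s \<in> {-T..T} \<Longrightarrow> (u has_vector_derivative u' s) (at s)"
    and bound: "\<And>s. s \<in> {-T..T} \<Longrightarrow> norm (u' s) \<le> L * norm (u s) + \<eta>"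
    and t: "t \<in> {-T..T}"
  shows "norm (u t) \<le> (norm (u 0) + \<eta>) * exp ((L + 1) * T)"
proof -
  have forward: "norm (v s) \<le> (norm (v 0) + \<eta>) * exp ((L + 1) * T)"
    if der_v: "\<And>s. s \<in> {0..T} \<Longrightarrow> (v has_vector_derivative v' s) (at s)"
      and bound_v: "\<And>s. s \<in> {0..T} \<Longrightarrow> norm (v' s) \<le> L * norm (v s) + \<eta>"
      and s: "s \<in> {0..T}" for v v' :: "real \<Rightarrow> 'a" and s
  proof -
    have "norm (v s) \<le> (norm (v 0) + \<eta>) * exp ((L + 1) * s)"
      using gronwall_norm[OF L \<eta> has_vector_derivative_at_within[OF der_v] bound_v s] .
    also have "\<dots> \<le> (norm (v 0) + \<eta>) * exp ((L + 1) * T)"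
      using s L \<eta> by (intro mult_left_mono) auto
    finally show ?thesis .
  qed
  show ?thesis
  proof (cases "0 \<le> t")
    case True
    then show ?thesis using forward[OF der bound] t by simp
  next
    case False
    have "((u \<circ> uminus) has_vector_derivative - u' (- s)) (at s)" if "s \<in> {0..T}" for s
      using vector_diff_chain_at[OF has_vector_derivative_minus[OF has_vector_derivative_id] der[of "- s"]] that
      by simp
    from forward[OF this, of "- t"] show ?thesis using bound False t by auto
  qed
qed

lemma lipschitz_on_cball_of_continuous_derivative:
  fixes F :: "'p::topological_space \<Rightarrow> real^'m::finite \<Rightarrow> real^'n::finite"
    and D :: "'p \<Rightarrow> real^'m \<Rightarrow> real^'m^'n"
  assumes K: "compact K"
    and F_deriv: "\<And>p z. p \<in> K \<Longrightarrow> (F p has_derivative (\<lambda>h. D p z *v h)) (at z)"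
    and D_cont: "continuous_on (K \<times> cball 0 R) (\<lambda>(p, z). D p z)"
  obtains C where "0 \<le> C"
    "\<And>p a b. p \<in> K \<Longrightarrow> a \<in> cball 0 R \<Longrightarrow> b \<in> cball 0 R \<Longrightarrow> norm (F p a - F p b) \<le> C * norm (a - b)"
proof -
  obtain C where C: "0 \<le> C" "\<And>x. x \<in> K \<times> cball 0 R \<Longrightarrow> onorm ((*v) ((\<lambda>(p, z). D p z) x)) \<le> C"
    using continuous_matrix_function_onorm_bound[OF compact_Times[OF K compact_cball] D_cont] by blast
  show thesis
  proof (rule that[OF C(1)])
    fix p and a b :: "real^'m"
    assume "p \<in> K" "a \<in> cball 0 R" "b \<in> cball 0 R"
    then have "norm (F p a - F p b - 0 *v (a - b)) \<le> C * norm (a - b)"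
      using C(2)[of "(p, _)"] by (intro linearization_error_bound[of "cball 0 R" _ "D p"] F_deriv) auto
    then show "norm (F p a - F p b) \<le> C * norm (a - b)" by simp
  qed
qed

lemma ode_solution_unique:
  fixes F :: "real \<Rightarrow> real^'m::finite \<Rightarrow> real^'m" and D :: "real \<Rightarrow> real^'m \<Rightarrow> real^'m^'m"
  assumes F_deriv: "\<And>t z. (F t has_derivative (\<lambda>h. D t z *v h)) (at z)"
    and D_cont: "continuous_on UNIV (\<lambda>(t, z). D t z)"
    and u: "\<And>t. (u has_vector_derivative F t (u t)) (at t)"
    and v: "\<And>t. (v has_vector_derivative F t (v t)) (at t)"
    and init: "u 0 = v 0"
  shows "u = v"
proof
  fix t
  define T :: real where "T = \<bar>t\<bar>"
  have "continuous_on {-T..T} u" "continuous_on {-T..T} v"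
    by (meson continuous_at_imp_continuous_on has_vector_derivative_continuous u v)+
  then have "compact (u ` {-T..T} \<union> v ` {-T..T})"
    by (intro compact_Un compact_continuous_image compact_Icc)
  then obtain R where R: "\<forall>x \<in> u ` {-T..T} \<union> v ` {-T..T}. norm x \<le> R"
    using compact_imp_bounded bounded_iff by metis
  obtain C where C: "0 \<le> C"
    "\<And>s a b. s \<in> {-T..T} \<Longrightarrow> a \<in> cball 0 R \<Longrightarrow> b \<in> cball 0 R \<Longrightarrow> norm (F s a - F s b) \<le> C * norm (a - b)"
    using lipschitz_on_cball_of_continuous_derivative[OF compact_Icc F_deriv continuous_on_subset[OF D_cont]]
    by blast
  have "norm (u t - v t) \<le> (norm (u 0 - v 0) + 0) * exp ((C + 1) * T)"
  proof (rule gronwall_norm_symmetric[OF C(1) order_refl])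
    show "((\<lambda>s. u s - v s) has_vector_derivative F s (u s) - F s (v s)) (at s)" for s
      by (intro has_vector_derivative_diff u v)
    show "norm (F s (u s) - F s (v s)) \<le> C * norm (u s - v s) + 0" if "s \<in> {-T..T}" for s
      using C(2)[OF that, of "u s" "v s"] R that by auto
  qed (auto simp: T_def)
  then show "u t = v t" using init by simp
qed

lemma fundamental_matrix_solution:
  fixes M \<Phi> :: "real \<Rightarrow> real^'n::finite^'n" and w :: "real \<Rightarrow> real^'n"
  assumes M_cont: "continuous_on {0..T} M" and \<Phi>_init: "\<Phi> 0 = mat 1"
    and \<Phi>_deriv: "\<And>t. t \<in> {0..T} \<Longrightarrow> (\<Phi> has_vector_derivative M t ** \<Phi> t) (at t within {0..T})"
    and w_deriv: "\<And>t. t \<in> {0..T} \<Longrightarrow> (w has_vector_derivative M t *v w t) (at t within {0..T})"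
    and t: "t \<in> {0..T}"
  shows "w t = \<Phi> t *v w 0"
proof -
  obtain L where L: "0 \<le> L" "\<And>s x. s \<in> {0..T} \<Longrightarrow> norm (M s *v x) \<le> L * norm x"
    using continuous_matrix_function_norm_bound[OF compact_Icc M_cont] by blast
  have "norm (w t - \<Phi> t *v w 0) \<le> (norm (w 0 - \<Phi> 0 *v w 0) + 0) * exp ((L + 1) * t)"
  proof (rule gronwall_norm[OF L(1) order_refl _ _ t])
    fix s assume s: "s \<in> {0..T}"
    have "((\<lambda>t. \<Phi> t *v w 0) has_vector_derivative (M s ** \<Phi> s) *v w 0) (at s within {0..T})"
      by (rule bounded_linear.has_vector_derivative[OF bounded_linear_matrix_vector_mult_left \<Phi>_deriv[OF s]])
    from has_vector_derivative_diff[OF w_deriv[OF s] this]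
    show "((\<lambda>t. w t - \<Phi> t *v w 0) has_vector_derivative M s *v (w s - \<Phi> s *v w 0)) (at s within {0..T})"
      by (simp add: matrix_vector_mul_assoc[symmetric] matrix_vector_mult_diff_distrib)
    show "norm (M s *v (w s - \<Phi> s *v w 0)) \<le> L * norm (w s - \<Phi> s *v w 0) + 0"
      using L(2)[OF s] by simp
  qed
  then show ?thesis using \<Phi>_init by simp
qed

section \<open>Limits of asymptotically linear sequences\<close>

lemma has_vector_derivative_of_uniform_limit:
  fixes f f' :: "nat \<Rightarrow> real \<Rightarrow> 'a::banach"
  assumes f_deriv: "\<And>k s. s \<in> {a..b} \<Longrightarrow> (f k has_vector_derivative f' k s) (at s within {a..b})"
    and f'_lim: "uniform_limit {a..b} f' g' sequentially"
    and f_lim: "\<And>s. s \<in> {a..b} \<Longrightarrow> (\<lambda>k. f k s) \<longlonglongrightarrow> g s"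
    and t: "t \<in> {a<..<b}"
  shows "(g has_vector_derivative g' t) (at t)"
proof -
  have "\<exists>h. \<forall>s\<in>{a..b}. (\<lambda>k. f k s) \<longlonglongrightarrow> h s \<and>
      (h has_derivative (\<lambda>x. x *\<^sub>R g' s)) (at s within {a..b})"
  proof (rule has_derivative_sequence[where f'="\<lambda>k s x. x *\<^sub>R f' k s" and ?x0.0=t])
    show "(f k has_derivative (\<lambda>x. x *\<^sub>R f' k s)) (at s within {a..b})" if "s \<in> {a..b}" for k s
      using f_deriv[OF that] by (simp add: has_vector_derivative_def)
    show "\<forall>\<^sub>F k in sequentially. \<forall>s\<in>{a..b}. \<forall>x. norm (x *\<^sub>R f' k s - x *\<^sub>R g' s) \<le> e * norm x"
      if "e > 0" for e
      using uniform_limitD[OF f'_lim that]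
    proof eventually_elim
      case (elim k)
      show ?case
      proof (intro ballI allI)
        fix s x assume "s \<in> {a..b}"
        then have "norm (f' k s - g' s) \<le> e" using elim by (simp add: dist_norm less_imp_le)
        then show "norm (x *\<^sub>R f' k s - x *\<^sub>R g' s) \<le> e * norm x"
          by (simp add: scaleR_diff_right[symmetric] mult.commute[of e] mult_left_mono)
      qed
    qed
  qed (use t f_lim[of t] in auto)
  then obtain h where h: "\<And>s. s \<in> {a..b} \<Longrightarrow> (\<lambda>k. f k s) \<longlonglongrightarrow> h s"
      "\<And>s. s \<in> {a..b} \<Longrightarrow> (h has_derivative (\<lambda>x. x *\<^sub>R g' s)) (at s within {a..b})"
    by blast
  have "(h has_derivative (\<lambda>x. x *\<^sub>R g' t)) (at t)"
    using h(2)[of t] t at_within_Icc_at[of a t b] by auto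
  then show ?thesis
    unfolding has_vector_derivative_def
  proof (rule has_derivative_transform_within_open[where s="{a<..<b}"])
    show "h s = g s" if "s \<in> {a<..<b}" for s
      using LIMSEQ_unique[OF h(1) f_lim] that by simp
  qed (use t in simp_all)
qed

locale asymptotically_linear_sequence =
  fixes A :: "real \<Rightarrow> 'a::{real_inner,banach} \<Rightarrow> 'a"
    and W W' :: "nat \<Rightarrow> real \<Rightarrow> 'a" and c :: 'a
  assumes A_linear: "linear (A t)"
    and A_bounded: "\<exists>L\<ge>0. \<forall>t\<in>{-T..T}. \<forall>x. norm (A t x) \<le> L * norm x"
    and W_deriv: "(W k has_vector_derivative W' k t) (at t)"
    and W_asymptotic: "\<epsilon> > 0 \<Longrightarrow>
      \<forall>\<^sub>F k in sequentially. \<forall>t\<in>{-T..T}. norm (W' k t - A t (W k t)) \<le> \<epsilon> * norm (W k t)"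
    and W_initial: "(\<lambda>k. W k 0) \<longlonglongrightarrow> c"
begin

lemma eventually_uniformly_bounded: "\<exists>B>0. \<forall>\<^sub>F k in sequentially. \<forall>t\<in>{-T..T}. norm (W k t) \<le> B"
proof -
  obtain L where L: "0 \<le> L" "\<And>t x. t \<in> {-T..T} \<Longrightarrow> norm (A t x) \<le> L * norm x"
    using A_bounded by blast
  have "\<forall>\<^sub>F k in sequentially. norm (W k 0) < norm c + 1"
    using tendsto_norm[OF W_initial] by (rule order_tendstoD) simp
  moreover have "\<forall>\<^sub>F k in sequentially. \<forall>t\<in>{-T..T}. norm (W' k t - A t (W k t)) \<le> 1 * norm (W k t)"
    by (rule W_asymptotic) simp
  ultimately have "\<forall>\<^sub>F k in sequentially. \<forall>t\<in>{-T..T}. norm (W k t) \<le> (norm c + 1) * exp ((L + 1 + 1) * T)"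
  proof eventually_elim
    case (elim k)
    show ?case
    proof
      fix t assume t: "t \<in> {-T..T}"
      have "norm (W k t) \<le> (norm (W k 0) + 0) * exp ((L + 1 + 1) * T)"
      proof (rule gronwall_norm_symmetric[OF _ order_refl W_deriv _ t])
        show "norm (W' k s) \<le> (L + 1) * norm (W k s) + 0" if "s \<in> {-T..T}" for s
          using norm_triangle_sub[of "W' k s" "A s (W k s)"] L(2)[OF that, of "W k s"] elim that
          by (fastforce simp: algebra_simps)
      qed (use L in simp)
      also have "\<dots> \<le> (norm c + 1) * exp ((L + 1 + 1) * T)"
        using elim by (intro mult_right_mono) auto
      finally show "norm (W k t) \<le> (norm c + 1) * exp ((L + 1 + 1) * T)" .
    qed
  qed
  moreover have "0 < (norm c + 1) * exp ((L + 1 + 1) * T)"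
    by (intro mult_pos_pos) (simp_all add: add_nonneg_pos)
  ultimately show ?thesis by blast
qed

lemma eventually_residual_small:
  "\<epsilon> > 0 \<Longrightarrow> \<forall>\<^sub>F k in sequentially. \<forall>t\<in>{-T..T}. norm (W' k t - A t (W k t)) \<le> \<epsilon>"
proof -
  assume "\<epsilon> > 0"
  obtain B where B: "B > 0" "\<forall>\<^sub>F k in sequentially. \<forall>t\<in>{-T..T}. norm (W k t) \<le> B"
    using eventually_uniformly_bounded by blast
  have "\<forall>\<^sub>F k in sequentially. \<forall>t\<in>{-T..T}. norm (W' k t - A t (W k t)) \<le> \<epsilon> / B * norm (W k t)"
    using \<open>\<epsilon> > 0\<close> B by (intro W_asymptotic) simp
  with B(2) show ?thesis
  proof eventually_elim
    case (elim k)
    show ?case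
    proof
      fix t assume "t \<in> {-T..T}"
      then have "norm (W' k t - A t (W k t)) \<le> \<epsilon> / B * B"
        using elim \<open>\<epsilon> > 0\<close> B(1) by (meson divide_nonneg_pos less_imp_le mult_left_mono order_trans)
      then show "norm (W' k t - A t (W k t)) \<le> \<epsilon>" using B(1) by simp
    qed
  qed
qed

lemma uniformly_Cauchy: "uniformly_Cauchy_on {-T..T} W"
proof (rule uniformly_Cauchy_onI)
  fix \<epsilon> :: real assume "\<epsilon> > 0"
  obtain L where L: "0 \<le> L" "\<And>t x. t \<in> {-T..T} \<Longrightarrow> norm (A t x) \<le> L * norm x"
    using A_bounded by blast
  define E where "E = exp ((L + 1) * T)"
  define \<delta> where "\<delta> = \<epsilon> / (2 * E)"
  have "\<delta> > 0" using \<open>\<epsilon> > 0\<close> by (simp add: \<delta>_def E_def)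
  obtain N1 where N1: "\<And>k t. k \<ge> N1 \<Longrightarrow> t \<in> {-T..T} \<Longrightarrow> norm (W' k t - A t (W k t)) \<le> \<delta> / 2"
    using eventually_residual_small[of "\<delta> / 2" T] \<open>\<delta> > 0\<close> unfolding eventually_sequentially
    by (metis half_gt_zero)
  obtain N2 where N2: "\<And>m n. m \<ge> N2 \<Longrightarrow> n \<ge> N2 \<Longrightarrow> dist (W m 0) (W n 0) < \<delta>"
    using LIMSEQ_imp_Cauchy[OF W_initial] \<open>\<delta> > 0\<close> unfolding Cauchy_def by blast
  show "\<exists>M. \<forall>t\<in>{-T..T}. \<forall>m\<ge>M. \<forall>n\<ge>M. dist (W m t) (W n t) < \<epsilon>"
  proof (intro exI[of _ "max N1 N2"] ballI allI impI)
    fix t m n assume t: "t \<in> {-T..T}" and mn: "m \<ge> max N1 N2" "n \<ge> max N1 N2"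
    have "norm (W m t - W n t) \<le> (norm (W m 0 - W n 0) + \<delta>) * E"
      unfolding E_def
    proof (rule gronwall_norm_symmetric[OF L(1) less_imp_le[OF \<open>\<delta> > 0\<close>] _ _ t])
      show "((\<lambda>t. W m t - W n t) has_vector_derivative W' m s - W' n s) (at s)" for s
        by (intro has_vector_derivative_diff W_deriv)
      fix s assume s: "s \<in> {-T..T}"
      have "W' m s - W' n s = A s (W m s - W n s) + (W' m s - A s (W m s)) - (W' n s - A s (W n s))"
        by (simp add: linear_diff[OF A_linear])
      also have "norm \<dots> \<le> norm (A s (W m s - W n s)) + norm (W' m s - A s (W m s)) + norm (W' n s - A s (W n s))"
        by (smt (verit) norm_triangle_ineq norm_triangle_ineq4)
      also have "\<dots> \<le> L * norm (W m s - W n s) + \<delta> / 2 + \<delta> / 2"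
        using L(2)[OF s, of "W m s - W n s"] N1[OF _ s, of m] N1[OF _ s, of n] mn by simp
      finally show "norm (W' m s - W' n s) \<le> L * norm (W m s - W n s) + \<delta>" by simp
    qed
    also have "\<dots> < (\<delta> + \<delta>) * E"
      using N2[of m n] mn by (intro mult_strict_right_mono) (auto simp: dist_norm E_def)
    also have "\<dots> = \<epsilon>" by (simp add: \<delta>_def E_def)
    finally show "dist (W m t) (W n t) < \<epsilon>" by (simp add: dist_norm)
  qed
qed

definition limit :: "real \<Rightarrow> 'a" where
  "limit t = lim (\<lambda>k. W k t)"

lemma uniformly_convergent_to_limit: "uniform_limit {-T..T} W limit sequentially"
  using Cauchy_uniformly_convergent[OF uniformly_Cauchy]
  unfolding uniformly_convergent_uniform_limit_iff limit_def .

lemma tendsto_limit: "(\<lambda>k. W k t) \<longlonglongrightarrow> limit t"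
  by (rule tendsto_uniform_limitI[OF uniformly_convergent_to_limit[of "\<bar>t\<bar>"]]) auto

lemma limit_initial: "limit 0 = c"
  using LIMSEQ_unique[OF tendsto_limit W_initial] .

lemma derivatives_converge_uniformly: "uniform_limit {-T..T} W' (\<lambda>t. A t (limit t)) sequentially"
proof (rule uniform_limitI)
  fix \<epsilon> :: real assume "\<epsilon> > 0"
  obtain L where L: "0 \<le> L" "\<And>t x. t \<in> {-T..T} \<Longrightarrow> norm (A t x) \<le> L * norm x"
    using A_bounded by blast
  have "\<forall>\<^sub>F k in sequentially. \<forall>t\<in>{-T..T}. dist (W k t) (limit t) < \<epsilon> / (2 * (L + 1))"
    using uniform_limitD[OF uniformly_convergent_to_limit] \<open>\<epsilon> > 0\<close> L(1) by simp
  moreover have "\<forall>\<^sub>F k in sequentially. \<forall>t\<in>{-T..T}. norm (W' k t - A t (W k t)) \<le> \<epsilon> / 4"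
    using \<open>\<epsilon> > 0\<close> by (intro eventually_residual_small) simp
  ultimately show "\<forall>\<^sub>F k in sequentially. \<forall>t\<in>{-T..T}. dist (W' k t) (A t (limit t)) < \<epsilon>"
  proof eventually_elim
    case (elim k)
    show ?case
    proof
      fix t assume t: "t \<in> {-T..T}"
      have "norm (A t (W k t - limit t)) \<le> L * norm (W k t - limit t)"
        using L(2)[OF t] .
      also have "\<dots> \<le> (L + 1) * (\<epsilon> / (2 * (L + 1)))"
        using elim t L(1) by (intro mult_mono) (auto simp: dist_norm less_imp_le)
      also have "\<dots> = \<epsilon> / 2"
        using L(1) by (simp add: field_simps)
      finally have "norm (A t (W k t - limit t)) \<le> \<epsilon> / 2" .
      moreover have "W' k t - A t (limit t) = (W' k t - A t (W k t)) + A t (W k t - limit t)"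
        by (simp add: linear_diff[OF A_linear])
      ultimately have "norm (W' k t - A t (limit t)) \<le> \<epsilon> / 4 + \<epsilon> / 2"
        using elim t by (metis add_mono norm_triangle_le)
      then show "dist (W' k t) (A t (limit t)) < \<epsilon>"
        using \<open>\<epsilon> > 0\<close> by (simp add: dist_norm)
    qed
  qed
qed

lemma limit_has_derivative: "(limit has_vector_derivative A t (limit t)) (at t)"
proof (rule has_vector_derivative_of_uniform_limit)
  let ?T = "\<bar>t\<bar> + 1"
  show "(W k has_vector_derivative W' k s) (at s within {-?T..?T})" for k s
    using W_deriv by (rule has_vector_derivative_at_within)
  show "uniform_limit {-?T..?T} W' (\<lambda>t. A t (limit t)) sequentially"
    by (rule derivatives_converge_uniformly)
  show "(\<lambda>k. W k s) \<longlonglongrightarrow> limit s" for s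
    by (rule tendsto_limit)
  show "t \<in> {-?T<..<?T}" by auto
qed

end

section \<open>Linearization along a curve\<close>

lemma uniformly_continuous_near_curve:
  fixes f :: "real \<Rightarrow> real \<Rightarrow> 'z::euclidean_space \<Rightarrow> 'b::metric_space" and u0 :: "real \<Rightarrow> 'z"
  assumes f_cont: "continuous_on (\<Lambda> \<times> UNIV \<times> UNIV) (\<lambda>(lam, t, z). f lam t z)"
    and \<Lambda>: "open \<Lambda>" "\<mu> \<in> \<Lambda>" and u0_cont: "continuous_on UNIV u0" and \<eta>: "\<eta> > 0"
  obtains \<delta> where "\<delta> > 0"
    "\<And>lam t y. \<bar>lam - \<mu>\<bar> < \<delta> \<Longrightarrow> t \<in> {-T..T} \<Longrightarrow> norm (y - u0 t) < \<delta> \<Longrightarrow>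
      lam \<in> \<Lambda> \<and> dist (f lam t y) (f \<mu> t (u0 t)) < \<eta>"
proof -
  obtain r where r: "r > 0" "ball \<mu> r \<subseteq> \<Lambda>" using \<Lambda> open_contains_ball by blast
  have "compact (u0 ` {-T..T})"
    by (rule compact_continuous_image) (auto intro: continuous_on_subset[OF u0_cont])
  then obtain R where R: "\<forall>y\<in>u0 ` {-T..T}. norm y \<le> R"
    using compact_imp_bounded bounded_iff by metis
  let ?K = "cball \<mu> (r / 2) \<times> {-T..T} \<times> cball (0::'z) (R + 1)"
  have "?K \<subseteq> \<Lambda> \<times> UNIV \<times> UNIV" using r by (auto simp: subset_iff dist_norm)
  then have "uniformly_continuous_on ?K (\<lambda>(lam, t, z). f lam t z)"
    using continuous_on_subset[OF f_cont] compact_uniformly_continuous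
    by (metis compact_Icc compact_Times compact_cball)
  then obtain d where d: "d > 0"
    and f_close: "\<And>x x'. x \<in> ?K \<Longrightarrow> x' \<in> ?K \<Longrightarrow> dist x' x < d \<Longrightarrow>
        dist ((\<lambda>(lam, t, z). f lam t z) x') ((\<lambda>(lam, t, z). f lam t z) x) < \<eta>"
    using \<eta> unfolding uniformly_continuous_on_def by metis
  define \<delta> where "\<delta> = min (r / 2) (min 1 (d / 2))"
  show thesis
  proof (rule that)
    show "\<delta> > 0" using r d by (simp add: \<delta>_def)
    fix lam t y
    assume lam: "\<bar>lam - \<mu>\<bar> < \<delta>" and t: "t \<in> {-T..T}" and y: "norm (y - u0 t) < \<delta>"
    have lam_K: "lam \<in> cball \<mu> (r / 2)" using lam by (simp add: \<delta>_def dist_real_def abs_minus_commute)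
    then show "lam \<in> \<Lambda> \<and> dist (f lam t y) (f \<mu> t (u0 t)) < \<eta>"
    proof (intro conjI)
      show "lam \<in> \<Lambda>" using lam_K r by (auto simp: dist_real_def)
      have u0_t: "norm (u0 t) \<le> R" using R t by auto
      have "(lam, t, y) \<in> ?K"
        using lam_K t u0_t y norm_triangle_ineq[of "y - u0 t" "u0 t"] by (auto simp: \<delta>_def)
      moreover have "(\<mu>, t, u0 t) \<in> ?K" using t u0_t r by auto
      moreover have "dist (lam, t, y) (\<mu>, t, u0 t) \<le> dist lam \<mu> + dist y (u0 t)"
        using sqrt_sum_squares_le_sum_abs[of "dist lam \<mu>" "dist y (u0 t)"] by (simp add: dist_Pair_Pair)
      moreover have "dist lam \<mu> + dist y (u0 t) < d"
        using lam y by (simp add: \<delta>_def dist_real_def dist_norm)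
      ultimately show "dist (f lam t y) (f \<mu> t (u0 t)) < \<eta>"
        using f_close by fastforce
    qed
  qed
qed

lemma uniform_linearization_along_curve:
  fixes F :: "real \<Rightarrow> real \<Rightarrow> real^'m::finite \<Rightarrow> real^'m"
    and D :: "real \<Rightarrow> real \<Rightarrow> real^'m \<Rightarrow> real^'m^'m" and u0 :: "real \<Rightarrow> real^'m"
  assumes F_deriv: "\<And>lam t z. lam \<in> \<Lambda> \<Longrightarrow> (F lam t has_derivative (\<lambda>h. D lam t z *v h)) (at z)"
    and D_cont: "continuous_on (\<Lambda> \<times> UNIV \<times> UNIV) (\<lambda>(lam, t, z). D lam t z)"
    and \<Lambda>: "open \<Lambda>" "\<mu> \<in> \<Lambda>" and u0_cont: "continuous_on UNIV u0" and \<epsilon>: "\<epsilon> > 0"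
  obtains \<delta> where "\<delta> > 0"
    "\<And>lam t z. \<bar>lam - \<mu>\<bar> < \<delta> \<Longrightarrow> t \<in> {-T..T} \<Longrightarrow> norm (z - u0 t) < \<delta> \<Longrightarrow>
      norm (F lam t z - F lam t (u0 t) - D \<mu> t (u0 t) *v (z - u0 t)) \<le> \<epsilon> * norm (z - u0 t)"
proof -
  define \<eta> where "\<eta> = \<epsilon> / (real CARD('m) * real CARD('m) + 1)"
  have "\<eta> > 0" using \<epsilon> by (simp add: \<eta>_def add_nonneg_pos)
  then obtain \<delta> where \<delta>: "\<delta> > 0"
    and D_close: "\<And>lam t y. \<bar>lam - \<mu>\<bar> < \<delta> \<Longrightarrow> t \<in> {-T..T} \<Longrightarrow> norm (y - u0 t) < \<delta> \<Longrightarrow>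
      lam \<in> \<Lambda> \<and> dist (D lam t y) (D \<mu> t (u0 t)) < \<eta>"
    using uniformly_continuous_near_curve[OF D_cont \<Lambda> u0_cont] by metis
  show thesis
  proof (rule that[OF \<delta>])
    fix lam t and z :: "real^'m"
    assume lam: "\<bar>lam - \<mu>\<bar> < \<delta>" and t: "t \<in> {-T..T}" and z: "norm (z - u0 t) < \<delta>"
    show "norm (F lam t z - F lam t (u0 t) - D \<mu> t (u0 t) *v (z - u0 t)) \<le> \<epsilon> * norm (z - u0 t)"
    proof (rule linearization_error_bound[of "ball (u0 t) \<delta>"])
      show "(F lam t has_derivative (\<lambda>h. D lam t y *v h)) (at y)" for y
        using F_deriv D_close[OF lam t z] by blast
      show "onorm ((*v) (D lam t y - D \<mu> t (u0 t))) \<le> \<epsilon>" if "y \<in> ball (u0 t) \<delta>" for y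
      proof (rule onorm_matrix_vector_mult_le_if_norm_small)
        have "norm (y - u0 t) < \<delta>" using that by (simp add: dist_norm norm_minus_commute)
        then show "norm (D lam t y - D \<mu> t (u0 t)) \<le> \<epsilon> / (real CARD('m) * real CARD('m) + 1)"
          using D_close[OF lam t] by (fastforce simp: \<eta>_def dist_norm)
      qed (use \<epsilon> in simp)
    qed (use z \<delta> in \<open>simp_all add: dist_norm norm_minus_commute\<close>)
  qed
qed

lemma eventually_linearization_along_sequence:
  fixes F :: "real \<Rightarrow> real \<Rightarrow> real^'m::finite \<Rightarrow> real^'m"
    and D :: "real \<Rightarrow> real \<Rightarrow> real^'m \<Rightarrow> real^'m^'m" and u0 :: "real \<Rightarrow> real^'m"
  assumes F_deriv: "\<And>lam t z. lam \<in> \<Lambda> \<Longrightarrow> (F lam t has_derivative (\<lambda>h. D lam t z *v h)) (at z)"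
    and D_cont: "continuous_on (\<Lambda> \<times> UNIV \<times> UNIV) (\<lambda>(lam, t, z). D lam t z)"
    and \<Lambda>: "open \<Lambda>" "\<mu> \<in> \<Lambda>" and u0_cont: "continuous_on UNIV u0"
    and lam_lim: "lam \<longlonglongrightarrow> \<mu>" and u_lim: "uniform_limit UNIV u u0 sequentially" and \<epsilon>: "\<epsilon> > 0"
  shows "\<forall>\<^sub>F k in sequentially. \<forall>t\<in>{-T..T}.
    norm (F (lam k) t (u k t) - F (lam k) t (u0 t) - D \<mu> t (u0 t) *v (u k t - u0 t)) \<le> \<epsilon> * norm (u k t - u0 t)"
proof -
  obtain \<delta> where \<delta>: "\<delta> > 0"
    and linearization: "\<And>lam t z. \<bar>lam - \<mu>\<bar> < \<delta> \<Longrightarrow> t \<in> {-T..T} \<Longrightarrow> norm (z - u0 t) < \<delta> \<Longrightarrow>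
      norm (F lam t z - F lam t (u0 t) - D \<mu> t (u0 t) *v (z - u0 t)) \<le> \<epsilon> * norm (z - u0 t)"
    using uniform_linearization_along_curve[OF F_deriv D_cont \<Lambda> u0_cont \<epsilon>] by blast
  have "\<forall>\<^sub>F k in sequentially. dist (lam k) \<mu> < \<delta>"
    using lam_lim \<delta> by (rule tendstoD)
  moreover have "\<forall>\<^sub>F k in sequentially. \<forall>t\<in>UNIV. dist (u k t) (u0 t) < \<delta>"
    using u_lim \<delta> by (rule uniform_limitD)
  ultimately show ?thesis
  proof eventually_elim
    case (elim k)
    show ?case
    proof
      fix t assume "t \<in> {-T..T}"
      with elim show "norm (F (lam k) t (u k t) - F (lam k) t (u0 t) - D \<mu> t (u0 t) *v (u k t - u0 t))
          \<le> \<epsilon> * norm (u k t - u0 t)"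
        by (intro linearization) (simp_all add: dist_real_def dist_norm)
    qed
  qed
qed

lemma eventually_asymptotically_linear_rescaled_subseq:
  fixes E E' :: "nat \<Rightarrow> real \<Rightarrow> 'a::real_normed_vector"
  assumes A_linear: "\<And>t. linear (A t)" and r: "strict_mono r" and s_pos: "\<And>k. 0 < s k"
    and asymptotic: "\<forall>\<^sub>F k in sequentially. \<forall>t\<in>I. norm (E' k t - A t (E k t)) \<le> \<epsilon> * norm (E k t)"
  shows "\<forall>\<^sub>F k in sequentially. \<forall>t\<in>I.
    norm (E' (r k) t /\<^sub>R s (r k) - A t (E (r k) t /\<^sub>R s (r k))) \<le> \<epsilon> * norm (E (r k) t /\<^sub>R s (r k))"
proof -
  have "\<forall>\<^sub>F k in sequentially. \<forall>t\<in>I.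
      norm (E' k t /\<^sub>R s k - A t (E k t /\<^sub>R s k)) \<le> \<epsilon> * norm (E k t /\<^sub>R s k)"
    using asymptotic
  proof eventually_elim
    case (elim k)
    show ?case
    proof
      fix t assume "t \<in> I"
      have "E' k t /\<^sub>R s k - A t (E k t /\<^sub>R s k) = (E' k t - A t (E k t)) /\<^sub>R s k"
        by (simp add: linear_scale[OF A_linear] scaleR_diff_right)
      then show "norm (E' k t /\<^sub>R s k - A t (E k t /\<^sub>R s k)) \<le> \<epsilon> * norm (E k t /\<^sub>R s k)"
        using elim \<open>t \<in> I\<close> s_pos[of k] by (simp add: divide_right_mono)
    qed
  qed
  then show ?thesis
    using filterlim_subseq[OF r] unfolding filterlim_iff by blast
qed

lemma normalized_differences_converge:
  fixes F :: "real \<Rightarrow> real \<Rightarrow> real^'m::finite \<Rightarrow> real^'m"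
    and D :: "real \<Rightarrow> real \<Rightarrow> real^'m \<Rightarrow> real^'m^'m"
    and u0 :: "real \<Rightarrow> real^'m" and u :: "nat \<Rightarrow> real \<Rightarrow> real^'m"
  assumes F_deriv: "\<And>lam t z. lam \<in> \<Lambda> \<Longrightarrow> (F lam t has_derivative (\<lambda>h. D lam t z *v h)) (at z)"
    and D_cont: "continuous_on (\<Lambda> \<times> UNIV \<times> UNIV) (\<lambda>(lam, t, z). D lam t z)"
    and \<Lambda>: "open \<Lambda>" "\<mu> \<in> \<Lambda>"
    and u0_deriv: "\<And>lam t. lam \<in> \<Lambda> \<Longrightarrow> (u0 has_vector_derivative F lam t (u0 t)) (at t)"
    and u_deriv: "\<And>k t. (u k has_vector_derivative F (lam k) t (u k t)) (at t)"
    and lam_in: "\<And>k. lam k \<in> \<Lambda>" and lam_lim: "lam \<longlonglongrightarrow> \<mu>"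
    and u_lim: "uniform_limit UNIV u u0 sequentially" and u_ne: "\<And>k. u k 0 \<noteq> u0 0"
  obtains r w where "strict_mono r" "w 0 \<noteq> 0"
    "\<And>t. (\<lambda>k. (u (r k) t - u0 t) /\<^sub>R norm (u (r k) 0 - u0 0)) \<longlonglongrightarrow> w t"
    "\<And>t. (w has_vector_derivative D \<mu> t (u0 t) *v w t) (at t)"
proof -
  define n where "n k = norm (u k 0 - u0 0)" for k
  have n_pos: "n k > 0" for k using u_ne[of k] by (simp add: n_def)
  define E where "E k t = u k t - u0 t" for k t
  define E' where "E' k t = F (lam k) t (u k t) - F (lam k) t (u0 t)" for k t
  have "E k 0 /\<^sub>R n k \<in> sphere 0 1" for k using n_pos[of k] by (simp add: E_def n_def)
  then obtain r c where r: "strict_mono r" and c: "c \<in> sphere 0 1"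
    and "((\<lambda>k. E k 0 /\<^sub>R n k) \<circ> r) \<longlonglongrightarrow> c"
    using compact_imp_seq_compact[OF compact_sphere, of 0 1] unfolding seq_compact_def by meson
  then have initial: "(\<lambda>k. E (r k) 0 /\<^sub>R n (r k)) \<longlonglongrightarrow> c" by (simp add: o_def)
  have u0_cont: "continuous_on UNIV u0"
    using u0_deriv[OF \<Lambda>(2)] by (meson continuous_at_imp_continuous_on has_vector_derivative_continuous)
  interpret L: asymptotically_linear_sequence "\<lambda>t. (*v) (D \<mu> t (u0 t))"
    "\<lambda>k t. E (r k) t /\<^sub>R n (r k)" "\<lambda>k t. E' (r k) t /\<^sub>R n (r k)" c
  proof unfold_locales
    show "\<exists>L\<ge>0. \<forall>t\<in>{-T..T}. \<forall>x. norm (D \<mu> t (u0 t) *v x) \<le> L * norm x" for T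
      using continuous_on_subset[OF continuous_on_along_curve[OF D_cont \<Lambda>(2) u0_cont] subset_UNIV]
      by (rule continuous_matrix_function_norm_bound[OF compact_Icc])
    show "((\<lambda>t. E (r k) t /\<^sub>R n (r k)) has_vector_derivative E' (r k) t /\<^sub>R n (r k)) (at t)" for k t
      unfolding E_def E'_def
      by (intro bounded_linear.has_vector_derivative[OF bounded_linear_scaleR_right]
          has_vector_derivative_diff u_deriv u0_deriv lam_in)
    show "\<forall>\<^sub>F k in sequentially. \<forall>t\<in>{-T..T}. norm (E' (r k) t /\<^sub>R n (r k) - D \<mu> t (u0 t) *v (E (r k) t /\<^sub>R n (r k)))
        \<le> \<epsilon> * norm (E (r k) t /\<^sub>R n (r k))" if "\<epsilon> > 0" for T \<epsilon>
    proof (rule eventually_asymptotically_linear_rescaled_subseq[OF _ r n_pos])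
      show "\<forall>\<^sub>F k in sequentially. \<forall>t\<in>{-T..T}. norm (E' k t - D \<mu> t (u0 t) *v E k t) \<le> \<epsilon> * norm (E k t)"
        using eventually_linearization_along_sequence[OF F_deriv D_cont \<Lambda> u0_cont lam_lim u_lim that]
        by (simp add: E_def E'_def)
    qed simp
  qed (simp_all add: matrix_vector_right_distrib matrix_vector_mult_scaleR initial)
  show thesis
  proof (rule that[OF r _ _ L.limit_has_derivative])
    show "L.limit 0 \<noteq> 0" using L.limit_initial c by auto
    show "(\<lambda>k. (u (r k) t - u0 t) /\<^sub>R norm (u (r k) 0 - u0 0)) \<longlonglongrightarrow> L.limit t" for t
      using L.tendsto_limit by (simp add: E_def n_def)
  qed
qed

section \<open>The reversibility \<open>N\<close> and the index \<open>\<nu>\<^sub>1\<close>\<close>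

lemma Nmat_mult_Inl: "((Nmat :: ('n::finite) phasemat) *v x) $ Inl i = - x $ Inl i"
  by (simp add: matrix_vector_mult_def Nmat_def if_distrib[where f="\<lambda>a. a * _"] cong: if_cong)

lemma Nmat_mult_Inr: "((Nmat :: ('n::finite) phasemat) *v x) $ Inr i = x $ Inr i"
  by (simp add: matrix_vector_mult_def Nmat_def if_distrib[where f="\<lambda>a. a * _"] cong: if_cong)

lemma Nmat_fixed_iff: "(Nmat :: ('n::finite) phasemat) *v x = x \<longleftrightarrow> (\<forall>i. x $ Inl i = 0)"
proof
  assume "Nmat *v x = x"
  then show "\<forall>i. x $ Inl i = 0" by (metis Nmat_mult_Inl add.inverse_unique add_0 neg_equal_zero)
next
  assume "\<forall>i. x $ Inl i = 0"
  then show "Nmat *v x = x"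
    unfolding vec_eq_iff by (metis Nmat_mult_Inl Nmat_mult_Inr minus_zero sum.exhaust)
qed

lemma matrix_vector_mult_Inl:
  "((M :: ('n::finite) phasemat) *v x) $ Inl i =
     (\<Sum>j\<in>UNIV. M $ Inl i $ Inl j * x $ Inl j) + (\<Sum>j\<in>UNIV. M $ Inl i $ Inr j * x $ Inr j)"
proof -
  have "(M *v x) $ Inl i = (\<Sum>b\<in>UNIV <+> UNIV. M $ Inl i $ b * x $ b)"
    by (simp add: matrix_vector_mult_def UNIV_Plus_UNIV)
  then show ?thesis
    by (subst (asm) sum.Plus) (simp_all add: o_def)
qed

lemma nu1_nonzero_of_Nmat_fixed_vectors:
  fixes \<gamma> :: "real \<Rightarrow> ('n::finite) phasemat"
  assumes "x \<noteq> 0" "Nmat *v x = x" "Nmat *v (\<gamma> (\<tau> / 2) *v x) = \<gamma> (\<tau> / 2) *v x"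
  shows "nu1 \<tau> \<gamma> \<noteq> 0"
proof -
  define y where "y = (\<chi> j. x $ Inr j)"
  have x_Inl: "x $ Inl i = 0" for i using assms(2) by (simp add: Nmat_fixed_iff)
  have "y \<noteq> 0"
    using assms(1) x_Inl unfolding y_def vec_eq_iff by (metis sum.exhaust vec_lambda_beta zero_index)
  moreover have "blockB (\<gamma> (\<tau> / 2)) *v y = 0"
  proof -
    have "(blockB (\<gamma> (\<tau> / 2)) *v y) $ i = (\<gamma> (\<tau> / 2) *v x) $ Inl i" for i
      unfolding matrix_vector_mult_Inl by (simp add: blockB_def y_def matrix_vector_mult_def x_Inl)
    then show ?thesis
      using assms(3) unfolding Nmat_fixed_iff by (simp add: vec_eq_iff)
  qed
  ultimately show ?thesis by (auto simp: nu1_def)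
qed

lemma nu1_nonzero_of_reversible_periodic_solution:
  fixes M \<Phi> :: "real \<Rightarrow> ('n::finite) phasemat" and w :: "real \<Rightarrow> 'n phase"
  assumes \<tau>: "0 < \<tau>" and M_cont: "continuous_on {0..\<tau>} M" and \<Phi>_init: "\<Phi> 0 = mat 1"
    and \<Phi>_deriv: "\<And>t. t \<in> {0..\<tau>} \<Longrightarrow> (\<Phi> has_vector_derivative M t ** \<Phi> t) (at t within {0..\<tau>})"
    and w_deriv: "\<And>t. (w has_vector_derivative M t *v w t) (at t)"
    and periodic: "\<And>t. w (t + \<tau>) = w t" and reversible: "\<And>t. w (- t) = Nmat *v w t"
    and "w 0 \<noteq> 0"
  shows "nu1 \<tau> \<Phi> \<noteq> 0"
proof (rule nu1_nonzero_of_Nmat_fixed_vectors)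
  show "w 0 \<noteq> 0" by fact
  show "Nmat *v w 0 = w 0" using reversible[of 0] by simp
  have "w (\<tau> / 2) = \<Phi> (\<tau> / 2) *v w 0"
    using \<tau> by (intro fundamental_matrix_solution[OF M_cont \<Phi>_init \<Phi>_deriv]
        has_vector_derivative_at_within[OF w_deriv]) auto
  moreover have "Nmat *v w (\<tau> / 2) = w (\<tau> / 2)"
    using reversible[of "\<tau> / 2"] periodic[of "- (\<tau> / 2)"] by simp
  ultimately show "Nmat *v (\<Phi> (\<tau> / 2) *v w 0) = \<Phi> (\<tau> / 2) *v w 0" by simp
qed

lemma bifurcation_point_imp_converging_solutions:
  assumes "bifurcation_point \<tau> \<Lambda> gradH \<mu> v0"
  obtains lam v where "\<And>k. lam k \<in> \<Lambda>" "\<And>k. solves_star \<tau> gradH (lam k) (v k)" "\<And>k. v k \<noteq> v0"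
    "lam \<longlonglongrightarrow> \<mu>" "uniform_limit UNIV v v0 sequentially"
proof -
  have "\<exists>lam v. lam \<in> \<Lambda> \<and> solves_star \<tau> gradH lam v \<and> v \<noteq> v0 \<and>
      dist lam \<mu> < inverse (Suc k) \<and> (\<forall>t. dist (v t) (v0 t) < inverse (Suc k))" for k :: nat
  proof -
    have "inverse (real (Suc k)) > 0" by simp
    then obtain lam v where "lam \<in> \<Lambda>" "solves_star \<tau> gradH lam v" "v \<noteq> v0" "\<bar>lam - \<mu>\<bar> < inverse (Suc k)"
      and close: "\<forall>t. norm (v t - v0 t) + norm (vector_derivative v (at t) - vector_derivative v0 (at t))
          < inverse (Suc k)"
      using assms unfolding bifurcation_point_def by blast
    moreover have "dist (v t) (v0 t) < inverse (Suc k)" for t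
      using close[rule_format, of t] norm_ge_zero[of "vector_derivative v (at t) - vector_derivative v0 (at t)"]
      unfolding dist_norm by linarith
    ultimately show ?thesis by (auto simp: dist_real_def)
  qed
  then obtain lam v where seq: "\<And>k. lam k \<in> \<Lambda> \<and> solves_star \<tau> gradH (lam k) (v k) \<and> v k \<noteq> v0 \<and>
      dist (lam k) \<mu> < inverse (Suc k) \<and> (\<forall>t. dist (v k t) (v0 t) < inverse (Suc k))"
    by metis
  have small: "\<forall>\<^sub>F k in sequentially. inverse (real (Suc k)) < \<epsilon>" if "\<epsilon> > 0" for \<epsilon>
    using LIMSEQ_inverse_real_of_nat that by (rule order_tendstoD)
  show thesis
  proof (rule that)
    show "lam \<longlonglongrightarrow> \<mu>"
    proof (rule tendstoI)
      fix \<epsilon> :: real assume "\<epsilon> > 0"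
      show "\<forall>\<^sub>F k in sequentially. dist (lam k) \<mu> < \<epsilon>"
        using small[OF \<open>\<epsilon> > 0\<close>] by (rule eventually_mono) (meson seq less_trans)
    qed
    show "uniform_limit UNIV v v0 sequentially"
    proof (rule uniform_limitI)
      fix \<epsilon> :: real assume "\<epsilon> > 0"
      show "\<forall>\<^sub>F k in sequentially. \<forall>t\<in>UNIV. dist (v k t) (v0 t) < \<epsilon>"
        using small[OF \<open>\<epsilon> > 0\<close>] by (rule eventually_mono) (meson seq less_trans)
    qed
  qed (use seq in auto)
qed

lemma reversible_periodic_limit:
  fixes f :: "nat \<Rightarrow> real \<Rightarrow> ('n::finite) phase"
  assumes lim: "\<And>t. (\<lambda>k. f k t) \<longlonglongrightarrow> w t"
    and periodic: "\<And>k t. f k (t + \<tau>) = f k t" and reversible: "\<And>k t. f k (- t) = Nmat *v f k t"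
  shows "w (t + \<tau>) = w t" "w (- t) = Nmat *v w t"
proof -
  show "w (t + \<tau>) = w t"
    using lim[of "t + \<tau>"] lim[of t] by (simp add: periodic LIMSEQ_unique)
  have "(\<lambda>k. Nmat *v f k t) \<longlonglongrightarrow> Nmat *v w t"
    by (rule bounded_linear.tendsto[OF matrix_vector_mul_bounded_linear lim])
  then show "w (- t) = Nmat *v w t"
    using lim[of "- t"] by (simp add: reversible LIMSEQ_unique)
qed

lemma linearized_solution_of_bifurcation:
  fixes gradH :: "real \<Rightarrow> real \<Rightarrow> ('n::finite) phase \<Rightarrow> 'n phase"
    and hessH :: "real \<Rightarrow> real \<Rightarrow> 'n phase \<Rightarrow> 'n phasemat" and v0 :: "real \<Rightarrow> 'n phase"
  assumes "open \<Lambda>"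
    and H_hess: "\<And>lam t z. lam \<in> \<Lambda> \<Longrightarrow> (gradH lam t has_derivative (\<lambda>h. hessH lam t z *v h)) (at z)"
    and hess_cont: "continuous_on (\<Lambda> \<times> UNIV \<times> UNIV) (\<lambda>(lam, t, z). hessH lam t z)"
    and v0_sol: "\<And>lam. lam \<in> \<Lambda> \<Longrightarrow> solves_star \<tau> gradH lam v0"
    and bif: "bifurcation_point \<tau> \<Lambda> gradH \<mu> v0"
  obtains w where "w 0 \<noteq> 0" "\<And>t. (w has_vector_derivative (Jmat ** hessH \<mu> t (v0 t)) *v w t) (at t)"
    "\<And>t. w (t + \<tau>) = w t" "\<And>t. w (- t) = Nmat *v w t"
proof -
  define F where "F lam t z = Jmat *v gradH lam t z" for lam t z
  define D where "D lam t z = Jmat ** hessH lam t z" for lam t z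
  have F_deriv: "(F lam t has_derivative (\<lambda>h. D lam t z *v h)) (at z)" if "lam \<in> \<Lambda>" for lam t z
    unfolding F_def D_def matrix_vector_mul_assoc[symmetric]
    by (rule bounded_linear.has_derivative[OF matrix_vector_mul_bounded_linear H_hess[OF that]])
  have D_cont: "continuous_on (\<Lambda> \<times> UNIV \<times> UNIV) (\<lambda>(lam, t, z). D lam t z)"
    using continuous_on_matrix_mult_left[OF hess_cont, of Jmat] by (simp add: D_def case_prod_unfold)
  have solves: "(u has_vector_derivative F lam t (u t)) (at t)" "u (t + \<tau>) = u t" "u (- t) = Nmat *v u t"
    if "solves_star \<tau> gradH lam u" for lam u t
    using that by (simp_all add: solves_star_def F_def)
  have \<mu>: "\<mu> \<in> \<Lambda>" using bif by (simp add: bifurcation_point_def)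
  obtain lam v where lam_in: "\<And>k. lam k \<in> \<Lambda>" and v_sol: "\<And>k. solves_star \<tau> gradH (lam k) (v k)"
    and v_ne: "\<And>k. v k \<noteq> v0" and lam_lim: "lam \<longlonglongrightarrow> \<mu>" and v_lim: "uniform_limit UNIV v v0 sequentially"
    using bifurcation_point_imp_converging_solutions[OF bif] by blast
  have v_ne_initial: "v k 0 \<noteq> v0 0" for k
    using ode_solution_unique[OF F_deriv[OF lam_in] continuous_on_slice[OF D_cont lam_in]
        solves(1)[OF v_sol] solves(1)[OF v0_sol[OF lam_in]]] v_ne by blast
  obtain r w where "strict_mono r" "w 0 \<noteq> 0"
    and w_lim: "\<And>t. (\<lambda>k. (v (r k) t - v0 t) /\<^sub>R norm (v (r k) 0 - v0 0)) \<longlonglongrightarrow> w t"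
    and w_deriv: "\<And>t. (w has_vector_derivative D \<mu> t (v0 t) *v w t) (at t)"
    using normalized_differences_converge[OF F_deriv D_cont \<open>open \<Lambda>\<close> \<mu> solves(1)[OF v0_sol]
        solves(1)[OF v_sol] lam_in lam_lim v_lim v_ne_initial] by blast
  show thesis
  proof (rule that)
    show "w 0 \<noteq> 0" by fact
    show "(w has_vector_derivative (Jmat ** hessH \<mu> t (v0 t)) *v w t) (at t)" for t
      using w_deriv by (simp add: D_def)
    show "w (t + \<tau>) = w t" "w (- t) = Nmat *v w t" for t
      by (rule reversible_periodic_limit[OF w_lim, where \<tau>=\<tau>];
          simp add: solves(2,3)[OF v_sol] solves(2,3)[OF v0_sol[OF \<mu>]] matrix_vector_mult_scaleR
            matrix_vector_mult_diff_distrib scaleR_diff_right)+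
  qed
qed

theorem theorem6p1:
  fixes \<tau> :: real and \<Lambda> :: "real set" and \<mu> :: real
    and H :: "real \<Rightarrow> real \<Rightarrow> ('n::finite) phase \<Rightarrow> real"
    and gradH :: "real \<Rightarrow> real \<Rightarrow> 'n phase \<Rightarrow> 'n phase"
    and hessH :: "real \<Rightarrow> real \<Rightarrow> 'n phase \<Rightarrow> 'n phasemat"
    and v0 :: "real \<Rightarrow> 'n phase"
    and \<gamma> :: "real \<Rightarrow> real \<Rightarrow> 'n phasemat"
  assumes tau_pos: "\<tau> > 0"
    and Lambda_int: "is_interval \<Lambda>" "open \<Lambda>" "\<Lambda> \<noteq> {}"
    and H_cont: "continuous_on (\<Lambda> \<times> UNIV \<times> UNIV) (\<lambda>(lam, t, z). H lam t z)"
    and H_grad: "\<And>lam t z. lam \<in> \<Lambda> \<Longrightarrow> (H lam t has_derivative (\<lambda>h. gradH lam t z \<bullet> h)) (at z)"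
    and H_hess: "\<And>lam t z. lam \<in> \<Lambda> \<Longrightarrow> (gradH lam t has_derivative (\<lambda>h. hessH lam t z *v h)) (at z)"
    and grad_cont: "continuous_on (\<Lambda> \<times> UNIV \<times> UNIV) (\<lambda>(lam, t, z). gradH lam t z)"
    and hess_cont: "continuous_on (\<Lambda> \<times> UNIV \<times> UNIV) (\<lambda>(lam, t, z). hessH lam t z)"
    and H_periodic: "\<And>lam t z. lam \<in> \<Lambda> \<Longrightarrow> H lam (t + \<tau>) z = H lam t z"
    and H_sym: "\<And>lam t z. lam \<in> \<Lambda> \<Longrightarrow> H lam (- t) (Nmat *v z) = H lam t z"
    and v0_sol: "\<And>lam. lam \<in> \<Lambda> \<Longrightarrow> solves_star \<tau> gradH lam v0"
    and gamma_init: "\<And>lam. lam \<in> \<Lambda> \<Longrightarrow> \<gamma> lam 0 = mat 1"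
    and gamma_ode: "\<And>lam t. lam \<in> \<Lambda> \<Longrightarrow> t \<in> {0..\<tau>} \<Longrightarrow>
        (\<gamma> lam has_vector_derivative (Jmat ** hessH lam t (v0 t) ** \<gamma> lam t)) (at t within {0..\<tau>})"
    and bif: "bifurcation_point \<tau> \<Lambda> gradH \<mu> v0"
  shows "(\<exists>v :: real \<Rightarrow> 'n phase. v \<noteq> (\<lambda>_. 0) \<and>
            (\<forall>t. (v has_vector_derivative (Jmat *v (hessH \<mu> t (v0 t) *v v t))) (at t)) \<and>
            (\<forall>t. v (t + \<tau>) = v t) \<and>
            (\<forall>t. v (- t) = Nmat *v v t))
         \<and> nu1 \<tau> (\<gamma> \<mu>) \<noteq> 0"
proof -
  have \<mu>: "\<mu> \<in> \<Lambda>" using bif by (simp add: bifurcation_point_def)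
  obtain w where w_init: "w 0 \<noteq> 0"
    and w_deriv: "\<And>t. (w has_vector_derivative (Jmat ** hessH \<mu> t (v0 t)) *v w t) (at t)"
    and periodic: "\<And>t. w (t + \<tau>) = w t" and reversible: "\<And>t. w (- t) = Nmat *v w t"
    using linearized_solution_of_bifurcation[OF Lambda_int(2) H_hess hess_cont v0_sol bif] by blast
  have v0_cont: "continuous_on UNIV v0"
    using v0_sol[OF \<mu>] unfolding solves_star_def
    by (meson continuous_at_imp_continuous_on has_vector_derivative_continuous)
  have "continuous_on {0..\<tau>} (\<lambda>t. Jmat ** hessH \<mu> t (v0 t))"
    using continuous_on_subset[OF continuous_on_along_curve[OF hess_cont \<mu> v0_cont] subset_UNIV]
    by (rule continuous_on_matrix_mult_left)
  then have "nu1 \<tau> (\<gamma> \<mu>) \<noteq> 0"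
    by (rule nu1_nonzero_of_reversible_periodic_solution[OF tau_pos _ gamma_init[OF \<mu>] gamma_ode[OF \<mu>]
          w_deriv periodic reversible w_init])
  moreover have "w \<noteq> (\<lambda>_. 0)" using w_init by auto
  ultimately show ?thesis
    using w_deriv periodic reversible by (auto simp: matrix_vector_mul_assoc)
qed

end
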